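(* Let $E$ be a graph, let $R$ be a unital subring of $\mathbb C$ closed under complex conjugation that has an essentially unique partition of the unit, let $x\in L_R(E)$ and $\lambda\in R$. If $\alpha,\beta\in E^*$ satisfy $2x=\alpha+\lambda\beta$ in $L_R(E)$, then $\alpha=\beta$.
   Context: A unital subring $R\subseteq\mathbb C$ closed under complex conjugation has an essentially unique partition of the unit if whenever $\lambda_1,\dots,\lambda_n\in R$ satisfy $\sum_{i=1}^n|\lambda_i|^2=1$, all but one of the $\lambda_i$ are zero. A graph $E=(E^0,E^1,r,s)$ has vertices $E^0$, edges $E^1$, and range and source maps $r,s$. A path is a word $e_1\cdots e_n$ with $r(e_i)=s(e_{i+1})$; vertices are paths of length $0$; $E^*$ is the set of finite paths, and a path $\alpha=e_1\cdots e_n$ is identified with the product $e_1\cdots e_n$ in $L_R(E)$. The Leavitt path algebra $L_R(E)$ is the universal $R$-algebra generated by pairwise orthogonal idempotents $\{v\}_{v\in E^0}$ and $\{e,e^*\}_{e\in E^1}$ with: $e^*f=0$ for $e\ne f$; $e^*e=r(e)$; $s(e)e=e=er(e)$; $e^*s(e)=e^*=r(e)e^*$; and $v=\sum_{e\in s^{-1}(v)}ee^*$ whenever $s^{-1}(v)$ is finite and nonempty. *)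

theory Defs
  imports Complex_Main
begin

definition conj_closed_unital_subring :: "complex set \<Rightarrow> bool" where
  "conj_closed_unital_subring R \<longleftrightarrow> 0 \<in> R \<and> 1 \<in> R \<and>
     (\<forall>a\<in>R. \<forall>b\<in>R. a + b \<in> R \<and> a - b \<in> R \<and> a * b \<in> R) \<and>
     (\<forall>a\<in>R. cnj a \<in> R)"

definition ess_unique_partition_of_unit :: "complex set \<Rightarrow> bool" where
  "ess_unique_partition_of_unit R \<longleftrightarrow>
     (\<forall>(n::nat) (l::nat \<Rightarrow> complex). (\<forall>i<n. l i \<in> R) \<and> (\<Sum>i<n. (cmod (l i))\<^sup>2) = 1
        \<longrightarrow> (\<exists>j<n. \<forall>i<n. i \<noteq> j \<longrightarrow> l i = 0))"

text \<open>A graph is given by a vertex set V, an edge set Ed, and range/source maps r, s.\<close>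

definition is_graph :: "'v set \<Rightarrow> 'e set \<Rightarrow> ('e \<Rightarrow> 'v) \<Rightarrow> ('e \<Rightarrow> 'v) \<Rightarrow> bool" where
  "is_graph V Ed r s \<longleftrightarrow> (\<forall>e\<in>Ed. r e \<in> V \<and> s e \<in> V)"

datatype ('v, 'e) path = PVtx 'v | PEdges "'e list"

fun is_path :: "'v set \<Rightarrow> 'e set \<Rightarrow> ('e \<Rightarrow> 'v) \<Rightarrow> ('e \<Rightarrow> 'v) \<Rightarrow> ('v, 'e) path \<Rightarrow> bool" where
  "is_path V Ed r s (PVtx v) \<longleftrightarrow> v \<in> V"
| "is_path V Ed r s (PEdges es) \<longleftrightarrow> es \<noteq> [] \<and> set es \<subseteq> Ed \<and>
      (\<forall>i. Suc i < length es \<longrightarrow> r (es ! i) = s (es ! Suc i))"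

datatype ('v, 'e) gen = Vtx 'v | Edg 'e | Ghost 'e

type_synonym ('v, 'e) fa = "('v, 'e) gen list \<Rightarrow> complex"

definition fa_word :: "('v, 'e) gen list \<Rightarrow> ('v, 'e) fa" where
  "fa_word u = (\<lambda>w. if w = u then 1 else 0)"

definition fa_add :: "('v, 'e) fa \<Rightarrow> ('v, 'e) fa \<Rightarrow> ('v, 'e) fa" where
  "fa_add p q = (\<lambda>w. p w + q w)"

definition fa_diff :: "('v, 'e) fa \<Rightarrow> ('v, 'e) fa \<Rightarrow> ('v, 'e) fa" where
  "fa_diff p q = (\<lambda>w. p w - q w)"

definition fa_smult :: "complex \<Rightarrow> ('v, 'e) fa \<Rightarrow> ('v, 'e) fa" where
  "fa_smult c p = (\<lambda>w. c * p w)"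

definition fa_mult :: "('v, 'e) fa \<Rightarrow> ('v, 'e) fa \<Rightarrow> ('v, 'e) fa" where
  "fa_mult p q = (\<lambda>w. \<Sum>i\<le>length w. p (take i w) * q (drop i w))"

text \<open>Elements of the free non-unital R-algebra: finitely supported, coefficients in R,
  no constant term.\<close>
definition free_alg :: "complex set \<Rightarrow> ('v, 'e) fa set" where
  "free_alg R = {p. finite {w. p w \<noteq> 0} \<and> (\<forall>w. p w \<in> R) \<and> p [] = 0}"

text \<open>The defining relations of the Leavitt path algebra (each relation u = w is encoded as u - w).\<close>
inductive_set leavitt_rels ::
  "'v set \<Rightarrow> 'e set \<Rightarrow> ('e \<Rightarrow> 'v) \<Rightarrow> ('e \<Rightarrow> 'v) \<Rightarrow> ('v, 'e) fa set"
  for V Ed r s where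
  idem: "v \<in> V \<Longrightarrow> fa_diff (fa_word [Vtx v, Vtx v]) (fa_word [Vtx v]) \<in> leavitt_rels V Ed r s"
| orth: "v \<in> V \<Longrightarrow> w \<in> V \<Longrightarrow> v \<noteq> w \<Longrightarrow> fa_word [Vtx v, Vtx w] \<in> leavitt_rels V Ed r s"
| ghost_orth: "e \<in> Ed \<Longrightarrow> f \<in> Ed \<Longrightarrow> e \<noteq> f \<Longrightarrow> fa_word [Ghost e, Edg f] \<in> leavitt_rels V Ed r s"
| ck1: "e \<in> Ed \<Longrightarrow> fa_diff (fa_word [Ghost e, Edg e]) (fa_word [Vtx (r e)]) \<in> leavitt_rels V Ed r s"
| src_edge: "e \<in> Ed \<Longrightarrow> fa_diff (fa_word [Vtx (s e), Edg e]) (fa_word [Edg e]) \<in> leavitt_rels V Ed r s"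
| edge_rng: "e \<in> Ed \<Longrightarrow> fa_diff (fa_word [Edg e, Vtx (r e)]) (fa_word [Edg e]) \<in> leavitt_rels V Ed r s"
| ghost_src: "e \<in> Ed \<Longrightarrow> fa_diff (fa_word [Ghost e, Vtx (s e)]) (fa_word [Ghost e]) \<in> leavitt_rels V Ed r s"
| rng_ghost: "e \<in> Ed \<Longrightarrow> fa_diff (fa_word [Vtx (r e), Ghost e]) (fa_word [Ghost e]) \<in> leavitt_rels V Ed r s"
| ck2: "v \<in> V \<Longrightarrow> finite {e \<in> Ed. s e = v} \<Longrightarrow> {e \<in> Ed. s e = v} \<noteq> {} \<Longrightarrow>
        fa_diff (fa_word [Vtx v]) (\<lambda>w. \<Sum>e\<in>{e \<in> Ed. s e = v}. fa_word [Edg e, Ghost e] w)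
          \<in> leavitt_rels V Ed r s"

inductive_set leavitt_ideal ::
  "complex set \<Rightarrow> 'v set \<Rightarrow> 'e set \<Rightarrow> ('e \<Rightarrow> 'v) \<Rightarrow> ('e \<Rightarrow> 'v) \<Rightarrow> ('v, 'e) fa set"
  for R V Ed r s where
  rel: "p \<in> leavitt_rels V Ed r s \<Longrightarrow> p \<in> leavitt_ideal R V Ed r s"
| add: "p \<in> leavitt_ideal R V Ed r s \<Longrightarrow> q \<in> leavitt_ideal R V Ed r s \<Longrightarrow>
        fa_add p q \<in> leavitt_ideal R V Ed r s"
| smult: "c \<in> R \<Longrightarrow> p \<in> leavitt_ideal R V Ed r s \<Longrightarrow> fa_smult c p \<in> leavitt_ideal R V Ed r s"
| lmult: "p \<in> leavitt_ideal R V Ed r s \<Longrightarrow> fa_mult (fa_word [g]) p \<in> leavitt_ideal R V Ed r s"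
| rmult: "p \<in> leavitt_ideal R V Ed r s \<Longrightarrow> fa_mult p (fa_word [g]) \<in> leavitt_ideal R V Ed r s"

definition leavitt_eq ::
  "complex set \<Rightarrow> 'v set \<Rightarrow> 'e set \<Rightarrow> ('e \<Rightarrow> 'v) \<Rightarrow> ('e \<Rightarrow> 'v) \<Rightarrow> ('v, 'e) fa \<Rightarrow> ('v, 'e) fa \<Rightarrow> bool" where
  "leavitt_eq R V Ed r s p q \<longleftrightarrow> fa_diff p q \<in> leavitt_ideal R V Ed r s"

fun path_elt :: "('v, 'e) path \<Rightarrow> ('v, 'e) fa" where
  "path_elt (PVtx v) = fa_word [Vtx v]"
| "path_elt (PEdges es) = fa_word (map Edg es)"

end

theory Submission
  imports Defs
begin

text \<open>If \<open>\<alpha> \<noteq> \<beta>\<close>, we build a linear functional on the free algebra that vanishes on the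
  Leavitt ideal, takes the value 1 on \<open>\<alpha>\<close> and 0 on \<open>\<beta>\<close>, and takes values in \<open>R\<close> on elements
  with coefficients in \<open>R\<close>. Applied to \<open>2x - \<alpha> - \<lambda>\<beta>\<close> it gives \<open>2c = 1\<close> with \<open>c \<in> R\<close>, so
  \<open>1/2 \<in> R\<close>; but then four copies of \<open>1/2\<close> form a partition of the unit with no
  distinguished entry.

  The functional sums the coefficients of those words that move a fixed state \<open>z\<close> to a fixed
  state \<open>y\<close> under a partial action of the generators, in the spirit of Chen's representation
  of \<open>L(E)\<close> on infinite paths. A state is a vertex together with a path issuing from it (a
  finite path continued by a fixed choice of edges until a sink or an infinite emitter is
  reached) and the net number of edges read so far; edges prepend to the path, ghost edges
  remove its first edge. The Cuntz-Krieger relation \<open>v = \<Sum> e e*\<close> is respected because at a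
  regular vertex such a path always continues along exactly one edge.\<close>

definition supp :: "('v, 'e) fa \<Rightarrow> ('v, 'e) gen list set" where
  "supp p = {w. p w \<noteq> 0}"

lemma fa_mult_word_left_Nil: "fa_mult (fa_word [g]) p [] = 0"
  by (simp add: fa_mult_def fa_word_def)

lemma fa_mult_word_left_Cons: "fa_mult (fa_word [g]) p (h # w) = (if h = g then p w else 0)"
  by (cases w) (simp_all add: fa_mult_def fa_word_def sum.atMost_Suc_shift del: sum.atMost_Suc)

lemma fa_mult_word_right_Nil: "fa_mult p (fa_word [g]) [] = 0"
  by (simp add: fa_mult_def fa_word_def)

lemma fa_mult_word_right_snoc: "fa_mult p (fa_word [g]) (w @ [h]) = (if h = g then p w else 0)"
proof -
  have "drop i (w @ [h]) = [g] \<longleftrightarrow> i = length w \<and> h = g" if "i \<le> length (w @ [h])" for i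
    using that by (cases "i \<le> length w") (auto simp: Suc_le_eq dest: arg_cong[of _ _ length])
  then have "fa_mult p (fa_word [g]) (w @ [h]) =
      (\<Sum>i\<le>length (w @ [h]). if i = length w then (if h = g then p w else 0) else 0)"
    unfolding fa_mult_def fa_word_def by (intro sum.cong) auto
  then show ?thesis by simp
qed

lemma finite_supp_fa_word: "finite (supp (fa_word u))"
  by (rule finite_subset[of _ "{u}"]) (auto simp: supp_def fa_word_def)

lemma finite_supp_fa_add: "finite (supp p) \<Longrightarrow> finite (supp q) \<Longrightarrow> finite (supp (fa_add p q))"
  by (rule finite_subset[of _ "supp p \<union> supp q"]) (auto simp: supp_def fa_add_def)

lemma finite_supp_fa_diff: "finite (supp p) \<Longrightarrow> finite (supp q) \<Longrightarrow> finite (supp (fa_diff p q))"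
  by (rule finite_subset[of _ "supp p \<union> supp q"]) (auto simp: supp_def fa_diff_def)

lemma finite_supp_fa_smult: "finite (supp p) \<Longrightarrow> finite (supp (fa_smult c p))"
  by (rule finite_subset[of _ "supp p"]) (auto simp: supp_def fa_smult_def)

lemma supp_sum_words: "supp (\<lambda>w. \<Sum>i\<in>S. fa_word (u i) w) \<subseteq> u ` S"
proof
  fix w assume "w \<in> supp (\<lambda>w. \<Sum>i\<in>S. fa_word (u i) w)"
  then have "\<exists>i\<in>S. fa_word (u i) w \<noteq> 0" by (auto simp: supp_def intro: ccontr sum.neutral)
  then show "w \<in> u ` S" by (auto simp: fa_word_def split: if_splits)
qed

lemma supp_fa_mult_word_left: "supp (fa_mult (fa_word [g]) p) \<subseteq> Cons g ` supp p"
proof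
  fix w assume "w \<in> supp (fa_mult (fa_word [g]) p)"
  then show "w \<in> Cons g ` supp p"
    by (cases w) (auto simp: supp_def fa_mult_word_left_Nil fa_mult_word_left_Cons split: if_splits)
qed

lemma supp_fa_mult_word_right: "supp (fa_mult p (fa_word [g])) \<subseteq> (\<lambda>w. w @ [g]) ` supp p"
proof
  fix w assume "w \<in> supp (fa_mult p (fa_word [g]))"
  then show "w \<in> (\<lambda>w. w @ [g]) ` supp p"
    by (cases w rule: rev_exhaust)
      (auto simp: supp_def fa_mult_word_right_Nil fa_mult_word_right_snoc split: if_splits)
qed

definition coeff_sum :: "('v, 'e) fa \<Rightarrow> (('v, 'e) gen list \<Rightarrow> bool) \<Rightarrow> complex" where
  "coeff_sum p P = (\<Sum>w\<in>supp p. p w * of_bool (P w))"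

lemma coeff_sum_superset:
  "finite S \<Longrightarrow> supp p \<subseteq> S \<Longrightarrow> coeff_sum p P = (\<Sum>w\<in>S. p w * of_bool (P w))"
  unfolding coeff_sum_def by (rule sum.mono_neutral_left) (auto simp: supp_def)

lemma coeff_sum_fa_word: "coeff_sum (fa_word u) P = of_bool (P u)"
  by (subst coeff_sum_superset[of "{u}"]) (auto simp: supp_def fa_word_def)

lemma coeff_sum_fa_add:
  assumes "finite (supp p)" "finite (supp q)"
  shows "coeff_sum (fa_add p q) P = coeff_sum p P + coeff_sum q P"
proof -
  have S: "finite (supp p \<union> supp q)" using assms by simp
  have sub: "supp (fa_add p q) \<subseteq> supp p \<union> supp q" by (auto simp: supp_def fa_add_def)
  show ?thesis
    unfolding coeff_sum_superset[OF S sub] coeff_sum_superset[OF S Un_upper1]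
      coeff_sum_superset[OF S Un_upper2]
    by (simp add: fa_add_def distrib_right sum.distrib)
qed

lemma coeff_sum_fa_diff:
  assumes "finite (supp p)" "finite (supp q)"
  shows "coeff_sum (fa_diff p q) P = coeff_sum p P - coeff_sum q P"
proof -
  have S: "finite (supp p \<union> supp q)" using assms by simp
  have sub: "supp (fa_diff p q) \<subseteq> supp p \<union> supp q" by (auto simp: supp_def fa_diff_def)
  show ?thesis
    unfolding coeff_sum_superset[OF S sub] coeff_sum_superset[OF S Un_upper1]
      coeff_sum_superset[OF S Un_upper2]
    by (simp add: fa_diff_def left_diff_distrib sum_subtractf)
qed

lemma coeff_sum_fa_smult:
  assumes "finite (supp p)"
  shows "coeff_sum (fa_smult c p) P = c * coeff_sum p P"
proof -
  have sub: "supp (fa_smult c p) \<subseteq> supp p" by (auto simp: supp_def fa_smult_def)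
  show ?thesis
    unfolding coeff_sum_superset[OF assms sub] coeff_sum_superset[OF assms subset_refl]
    by (simp add: fa_smult_def sum_distrib_left mult.assoc)
qed

lemma coeff_sum_sum_words:
  assumes "finite S" "inj_on u S"
  shows "coeff_sum (\<lambda>w. \<Sum>i\<in>S. fa_word (u i) w) P = (\<Sum>i\<in>S. of_bool (P (u i)))"
proof -
  have "coeff_sum (\<lambda>w. \<Sum>i\<in>S. fa_word (u i) w) P =
      (\<Sum>j\<in>S. (\<Sum>i\<in>S. fa_word (u i) (u j)) * of_bool (P (u j)))"
    unfolding coeff_sum_superset[OF finite_imageI[OF assms(1)] supp_sum_words]
      sum.reindex[OF assms(2)] o_def ..
  also have "\<dots> = (\<Sum>j\<in>S. of_bool (P (u j)))"
  proof (rule sum.cong[OF refl])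
    fix j assume "j \<in> S"
    then have "(\<Sum>i\<in>S. fa_word (u i) (u j)) = (\<Sum>i\<in>S. if i = j then 1 else 0)"
      using assms(2) by (intro sum.cong) (auto simp: fa_word_def inj_on_def)
    then show "(\<Sum>i\<in>S. fa_word (u i) (u j)) * of_bool (P (u j)) = of_bool (P (u j))"
      using assms(1) \<open>j \<in> S\<close> by simp
  qed
  finally show ?thesis .
qed

lemma coeff_sum_fa_mult_word_left:
  assumes "finite (supp p)"
  shows "coeff_sum (fa_mult (fa_word [g]) p) P = coeff_sum p (\<lambda>w. P (g # w))"
proof -
  have "coeff_sum (fa_mult (fa_word [g]) p) P =
      (\<Sum>w\<in>supp p. fa_mult (fa_word [g]) p (g # w) * of_bool (P (g # w)))"
    unfolding coeff_sum_superset[OF finite_imageI[OF assms] supp_fa_mult_word_left]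
    by (simp add: sum.reindex del: of_bool_eq)
  then show ?thesis by (simp add: fa_mult_word_left_Cons coeff_sum_def del: of_bool_eq)
qed

lemma coeff_sum_fa_mult_word_right:
  assumes "finite (supp p)"
  shows "coeff_sum (fa_mult p (fa_word [g])) P = coeff_sum p (\<lambda>w. P (w @ [g]))"
proof -
  have "coeff_sum (fa_mult p (fa_word [g])) P =
      (\<Sum>w\<in>supp p. fa_mult p (fa_word [g]) (w @ [g]) * of_bool (P (w @ [g])))"
    unfolding coeff_sum_superset[OF finite_imageI[OF assms] supp_fa_mult_word_right]
    by (simp add: sum.reindex inj_on_def del: of_bool_eq)
  then show ?thesis by (simp add: fa_mult_word_right_snoc coeff_sum_def del: of_bool_eq)
qed

lemma sum_in_subring:
  assumes "conj_closed_unital_subring R" "\<And>w. w \<in> S \<Longrightarrow> f w \<in> R"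
  shows "sum f S \<in> R"
  using assms(2)
proof (induction S rule: infinite_finite_induct)
  case (insert w S)
  then show ?case using assms(1) by (simp add: conj_closed_unital_subring_def)
qed (use assms(1) in \<open>simp_all add: conj_closed_unital_subring_def\<close>)

lemma coeff_sum_in_subring:
  assumes "conj_closed_unital_subring R" "\<And>w. p w \<in> R"
  shows "coeff_sum p P \<in> R"
  unfolding coeff_sum_def
  by (rule sum_in_subring[OF assms(1)]) (use assms in \<open>auto simp: conj_closed_unital_subring_def\<close>)

lemma finite_supp_leavitt_rels: "q \<in> leavitt_rels V Ed r s \<Longrightarrow> finite (supp q)"
proof (induction rule: leavitt_rels.induct)
  case (ck2 v)
  have "finite (supp (\<lambda>w. \<Sum>e\<in>{e \<in> Ed. s e = v}. fa_word [Edg e, Ghost e] w))"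
    using ck2 by (intro finite_subset[OF supp_sum_words]) simp
  then show ?case by (intro finite_supp_fa_diff finite_supp_fa_word)
qed (auto intro: finite_supp_fa_diff finite_supp_fa_word)

lemma finite_supp_leavitt_ideal: "p \<in> leavitt_ideal R V Ed r s \<Longrightarrow> finite (supp p)"
proof (induction rule: leavitt_ideal.induct)
  case (lmult p g)
  then show ?case by (intro finite_subset[OF supp_fa_mult_word_left]) simp
next
  case (rmult p g)
  then show ?case by (intro finite_subset[OF supp_fa_mult_word_right]) simp
qed (auto intro: finite_supp_leavitt_rels finite_supp_fa_add finite_supp_fa_smult)

lemma coeff_sum_leavitt_ideal_eq_0:
  assumes "p \<in> leavitt_ideal R V Ed r s"
    and "\<And>q P. q \<in> leavitt_rels V Ed r s \<Longrightarrow> P \<in> \<P> \<Longrightarrow> coeff_sum q P = 0"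
    and "\<And>P g. P \<in> \<P> \<Longrightarrow> (\<lambda>w. P (g # w)) \<in> \<P>"
    and "\<And>P g. P \<in> \<P> \<Longrightarrow> (\<lambda>w. P (w @ [g])) \<in> \<P>"
    and "P \<in> \<P>"
  shows "coeff_sum p P = 0"
  using assms(1,5)
proof (induction arbitrary: P rule: leavitt_ideal.induct)
  case (rel p)
  then show ?case using assms(2) by blast
next
  case (add p q)
  then show ?case by (simp add: coeff_sum_fa_add finite_supp_leavitt_ideal)
next
  case (smult c p)
  then show ?case by (simp add: coeff_sum_fa_smult finite_supp_leavitt_ideal)
next
  case (lmult p g)
  then show ?case by (simp add: coeff_sum_fa_mult_word_left finite_supp_leavitt_ideal assms(3))
next
  case (rmult p g)
  then show ?case by (simp add: coeff_sum_fa_mult_word_right finite_supp_leavitt_ideal assms(4))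
qed

lemma half_not_in_ess_unique_partition:
  assumes "ess_unique_partition_of_unit R"
  shows "1 / 2 \<notin> R"
proof
  assume "1 / 2 \<in> R"
  moreover have "(\<Sum>i<4::nat. (cmod (1 / 2 :: complex))\<^sup>2) = 1"
    by (simp add: power2_eq_square)
  ultimately obtain j :: nat where "\<forall>i<4. i = j"
    using assms[unfolded ess_unique_partition_of_unit_def, rule_format, of 4 "\<lambda>_. 1 / 2"]
    by auto
  then have "0 = j" "1 = j" by auto
  then show False by simp
qed

definition seq_cons :: "'a \<Rightarrow> (nat \<Rightarrow> 'a option) \<Rightarrow> nat \<Rightarrow> 'a option" where
  "seq_cons e p = (\<lambda>i. case i of 0 \<Rightarrow> Some e | Suc j \<Rightarrow> p j)"

lemma seq_cons_0 [simp]: "seq_cons e p 0 = Some e"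
  and seq_cons_Suc [simp]: "seq_cons e p (Suc i) = p i"
  by (simp_all add: seq_cons_def)

lemma seq_cons_tail: "p 0 = Some e \<Longrightarrow> seq_cons e (\<lambda>i. p (Suc i)) = p"
  by (rule ext) (simp add: seq_cons_def split: nat.split)

text \<open>In a state \<open>(n, u, p)\<close>, \<open>p\<close> lists the edges of a finite or infinite path starting at
  \<open>u\<close> (\<open>None\<close> marks its end), and \<open>n\<close> counts the edges read; the counter is what tells a
  vertex apart from a cycle based at it.\<close>

type_synonym ('v, 'e) state = "int \<times> 'v \<times> (nat \<Rightarrow> 'e option)"

fun path_word :: "('v, 'e) path \<Rightarrow> ('v, 'e) gen list" where
  "path_word (PVtx v) = [Vtx v]"
| "path_word (PEdges es) = map Edg es"

lemma path_elt_eq_fa_word: "path_elt a = fa_word (path_word a)"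
  by (cases a) simp_all

context
  fixes Ed :: "'e set" and r s :: "'e \<Rightarrow> 'v"
begin

definition regular :: "'v \<Rightarrow> bool" where
  "regular v \<longleftrightarrow> finite {e \<in> Ed. s e = v} \<and> {e \<in> Ed. s e = v} \<noteq> {}"

definition out_edge :: "'v \<Rightarrow> 'e" where
  "out_edge v = (SOME e. e \<in> Ed \<and> s e = v)"

lemma out_edge: "regular v \<Longrightarrow> out_edge v \<in> Ed \<and> s (out_edge v) = v"
  unfolding regular_def out_edge_def by (rule someI_ex) auto

fun canonical_tail :: "'v \<Rightarrow> nat \<Rightarrow> 'e option" where
  "canonical_tail v 0 = (if regular v then Some (out_edge v) else None)"
| "canonical_tail v (Suc i) = (if regular v then canonical_tail (r (out_edge v)) i else None)"

fun path_from :: "'v \<Rightarrow> 'e list \<Rightarrow> bool" where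
  "path_from u [] = True"
| "path_from u (e # es) \<longleftrightarrow> e \<in> Ed \<and> s e = u \<and> path_from (r e) es"

fun end_vertex :: "'v \<Rightarrow> 'e list \<Rightarrow> 'v" where
  "end_vertex u [] = u"
| "end_vertex u (e # es) = end_vertex (r e) es"

fun extend_path :: "'v \<Rightarrow> 'e list \<Rightarrow> nat \<Rightarrow> 'e option" where
  "extend_path u [] = canonical_tail u"
| "extend_path u (e # es) = seq_cons e (extend_path (r e) es)"

definition valid_states :: "('v, 'e) state set" where
  "valid_states = {(n, u, extend_path u es) | n u es. path_from u es}"

fun gen_step :: "('v, 'e) gen \<Rightarrow> ('v, 'e) state \<Rightarrow> ('v, 'e) state option" where
  "gen_step (Vtx v) (n, u, p) = (if u = v then Some (n, u, p) else None)"
| "gen_step (Edg e) (n, u, p) =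
    (if u = r e \<and> e \<in> Ed then Some (n + 1, s e, seq_cons e p) else None)"
| "gen_step (Ghost e) (n, u, p) =
    (if u = s e \<and> p 0 = Some e then Some (n - 1, r e, \<lambda>i. p (Suc i)) else None)"

text \<open>Words act from the right end, like composites of operators.\<close>

fun word_act :: "('v, 'e) gen list \<Rightarrow> ('v, 'e) state \<Rightarrow> ('v, 'e) state option" where
  "word_act [] z = Some z"
| "word_act (g # w) z = Option.bind (word_act w z) (gen_step g)"

lemma word_act_snoc: "word_act (w @ [g]) z = Option.bind (gen_step g z) (word_act w)"
  by (induction w) auto

lemma valid_states_canonical_tail: "(n, u, canonical_tail u) \<in> valid_states"
  unfolding valid_states_def by (auto intro!: exI[of _ "[]"])

lemma valid_state_regular_head:
  assumes "(n, v, p) \<in> valid_states" "regular v"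
  shows "\<exists>e\<in>Ed. s e = v \<and> p 0 = Some e"
proof -
  obtain es where "p = extend_path v es" "path_from v es"
    using assms(1) unfolding valid_states_def by auto
  then show ?thesis using out_edge[OF assms(2)] assms(2) by (cases es) auto
qed

lemma valid_state_drop_head:
  assumes "(n, u, p) \<in> valid_states" "p 0 = Some e"
  shows "(n - 1, r e, \<lambda>i. p (Suc i)) \<in> valid_states"
proof -
  obtain es where p: "p = extend_path u es" and es: "path_from u es"
    using assms(1) unfolding valid_states_def by auto
  show ?thesis
  proof (cases es)
    case Nil
    then have "regular u" "e = out_edge u" using assms(2) p by (auto split: if_splits)
    then show ?thesis using Nil p valid_states_canonical_tail by simp
  next
    case (Cons e' es')
    then show ?thesis using assms(2) p es unfolding valid_states_def by force
  qed
qed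

lemma gen_step_valid_states:
  assumes "z \<in> valid_states" "gen_step g z = Some z'"
  shows "z' \<in> valid_states"
proof (cases g)
  case (Edg e)
  obtain n u es where z: "z = (n, u, extend_path u es)" and es: "path_from u es"
    using assms(1) unfolding valid_states_def by auto
  then have "u = r e" "e \<in> Ed" "z' = (n + 1, s e, extend_path (s e) (e # es))"
    using assms(2) Edg by (auto split: if_splits)
  then show ?thesis using es unfolding valid_states_def by (auto intro!: exI[of _ "e # es"])
next
  case (Ghost e)
  then show ?thesis using assms valid_state_drop_head by (cases z) (auto split: if_splits)
qed (use assms in \<open>cases z, auto split: if_splits\<close>)

lemma sum_edge_ghost_word_act:
  assumes "z \<in> valid_states" "regular v"
  shows "(\<Sum>e\<in>{e \<in> Ed. s e = v}. of_bool (word_act [Edg e, Ghost e] z \<in> Some ` Y)) =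
    (of_bool (word_act [Vtx v] z \<in> Some ` Y) :: complex)"
proof -
  obtain n u p where z: "z = (n, u, p)" by (cases z)
  show ?thesis
  proof (cases "u = v")
    case True
    then obtain e0 where e0: "e0 \<in> Ed" "s e0 = v" "p 0 = Some e0"
      using valid_state_regular_head assms z by blast
    have "word_act [Edg e, Ghost e] z = (if e = e0 then Some z else None)" if "s e = v" for e
      using that e0 z True by (auto simp: seq_cons_tail)
    then have "(\<Sum>e\<in>{e \<in> Ed. s e = v}. of_bool (word_act [Edg e, Ghost e] z \<in> Some ` Y)) =
        (\<Sum>e\<in>{e \<in> Ed. s e = v}. if e = e0 then of_bool (Some z \<in> Some ` Y) else (0 :: complex))"
      by (intro sum.cong) auto
    also have "\<dots> = of_bool (word_act [Vtx v] z \<in> Some ` Y)"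
      using assms(2) e0 z True by (simp add: regular_def)
    finally show ?thesis .
  next
    case False
    then show ?thesis using z by (auto intro: sum.neutral)
  qed
qed

lemma coeff_sum_leavitt_rels_word_act:
  assumes "q \<in> leavitt_rels V Ed r s" "z \<in> valid_states"
  shows "coeff_sum q (\<lambda>w. word_act w z \<in> Some ` Y) = 0"
proof -
  obtain n u p where z: "z = (n, u, p)" by (cases z)
  from assms(1) show ?thesis
  proof (induction rule: leavitt_rels.induct)
    case (ck2 v)
    define S where "S = {e \<in> Ed. s e = v}"
    have "finite S" "regular v" using ck2 unfolding S_def regular_def by blast+
    have inj: "inj_on (\<lambda>e. [Edg e, Ghost e]) S" by (simp add: inj_on_def)
    have "coeff_sum (fa_diff (fa_word [Vtx v]) (\<lambda>w. \<Sum>e\<in>S. fa_word [Edg e, Ghost e] w))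
        (\<lambda>w. word_act w z \<in> Some ` Y) =
      of_bool (word_act [Vtx v] z \<in> Some ` Y) -
      (\<Sum>e\<in>S. of_bool (word_act [Edg e, Ghost e] z \<in> Some ` Y))"
      unfolding coeff_sum_fa_diff[OF finite_supp_fa_word
          finite_subset[OF supp_sum_words finite_imageI[OF \<open>finite S\<close>]]]
        coeff_sum_fa_word coeff_sum_sum_words[OF \<open>finite S\<close> inj] ..
    also have "\<dots> = 0"
      unfolding S_def sum_edge_ghost_word_act[OF assms(2) \<open>regular v\<close>] by simp
    finally show ?case unfolding S_def .
  qed (auto simp: z coeff_sum_fa_diff coeff_sum_fa_word finite_supp_fa_word)
qed

lemma coeff_sum_leavitt_ideal_word_act:
  assumes "p \<in> leavitt_ideal R V Ed r s" "z \<in> valid_states"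
  shows "coeff_sum p (\<lambda>w. word_act w z \<in> Some ` Y) = 0"
proof -
  let ?\<P> = "{\<lambda>w. word_act w t \<in> Some ` T | t T. t \<in> valid_states}"
  have "(\<lambda>w. P (g # w)) \<in> ?\<P>" if P: "P \<in> ?\<P>" for P g
  proof -
    obtain t T where "t \<in> valid_states" "P = (\<lambda>w. word_act w t \<in> Some ` T)"
      using P by blast
    moreover have "(\<lambda>w. word_act (g # w) t \<in> Some ` T) =
        (\<lambda>w. word_act w t \<in> Some ` {y. gen_step g y \<in> Some ` T})"
      by (auto split: Option.bind_splits)
    ultimately show ?thesis by blast
  qed
  moreover have "(\<lambda>w. P (w @ [g])) \<in> ?\<P>" if "P \<in> ?\<P>" for P g
  proof -
    obtain t T where t: "t \<in> valid_states" and P: "P = (\<lambda>w. word_act w t \<in> Some ` T)"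
      using \<open>P \<in> ?\<P>\<close> by blast
    show ?thesis
    proof (cases "gen_step g t")
      case None
      then have "(\<lambda>w. P (w @ [g])) = (\<lambda>w. word_act w t \<in> Some ` {})"
        by (simp add: P word_act_snoc)
      then show ?thesis using t by blast
    next
      case (Some t')
      then have "(\<lambda>w. P (w @ [g])) = (\<lambda>w. word_act w t' \<in> Some ` T)"
        by (simp add: P word_act_snoc)
      then show ?thesis using gen_step_valid_states[OF t Some] by blast
    qed
  qed
  ultimately show ?thesis
    using coeff_sum_leavitt_ideal_eq_0[OF assms(1), of ?\<P>] coeff_sum_leavitt_rels_word_act assms(2)
    by blast
qed

lemma word_act_path_from_tail:
  "path_from u es \<Longrightarrow>
    word_act (map Edg es) (n, end_vertex u es, canonical_tail (end_vertex u es)) =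
      Some (n + int (length es), u, extend_path u es)"
  by (induction es arbitrary: u) auto

lemma word_act_edges_SomeD:
  "word_act (map Edg es) z = Some (n', u', p') \<Longrightarrow>
    n' = fst z + int (length es) \<and> (\<forall>i<length es. p' i = Some (es ! i))"
proof (induction es arbitrary: n' u' p')
  case (Cons e es)
  then obtain n1 u1 p1 where "word_act (map Edg es) z = Some (n1, u1, p1)"
    "n' = n1 + 1" "p' = seq_cons e p1"
    by (auto split: Option.bind_splits if_splits)
  with Cons.IH show ?case by (auto simp: less_Suc_eq_0_disj)
qed (cases z; simp)

lemma path_from_composable:
  assumes "set es \<subseteq> Ed" "\<forall>i. Suc i < length es \<longrightarrow> r (es ! i) = s (es ! Suc i)"
  shows "path_from (s (hd es)) es"
  using assms
proof (induction es)
  case (Cons e es)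
  have "\<forall>i. Suc i < length es \<longrightarrow> r (es ! i) = s (es ! Suc i)"
    using Cons.prems(2) by (metis Suc_less_eq length_Cons nth_Cons_Suc)
  moreover have "es \<noteq> [] \<Longrightarrow> r e = s (hd es)"
    using Cons.prems(2)[rule_format, of 0] by (cases es) auto
  ultimately show ?case using Cons by (cases es) auto
qed simp

lemma word_act_path_word_defined:
  assumes "is_path V Ed r s a"
  shows "\<exists>z\<in>valid_states. \<exists>y. word_act (path_word a) z = Some y"
proof (cases a)
  case (PVtx v)
  then show ?thesis using valid_states_canonical_tail[of 0 v] by force
next
  case (PEdges es)
  let ?u = "end_vertex (s (hd es)) es"
  have "word_act (path_word a) (0, ?u, canonical_tail ?u) \<noteq> None"
    using word_act_path_from_tail[OF path_from_composable] assms PEdges by simp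
  then show ?thesis using valid_states_canonical_tail by blast
qed

lemma word_act_path_word_inj:
  assumes "word_act (path_word a) z = Some y" "word_act (path_word b) z = Some y"
    and "is_path V Ed r s a" "is_path V Ed r s b"
  shows "a = b"
proof -
  obtain n' u' p' where y: "y = (n', u', p')" by (cases y)
  have vertex: "y = z \<and> u' = v" if "word_act (path_word (PVtx v)) z = Some y" for v
    using that y by (cases z) (auto split: if_splits)
  have edges: "n' = fst z + int (length es) \<and> (\<forall>i<length es. p' i = Some (es ! i))"
    if "word_act (path_word (PEdges es)) z = Some y" for es
    using that y word_act_edges_SomeD by simp
  have vertex_edges: False
    if "word_act (path_word (PVtx v)) z = Some y" "word_act (path_word (PEdges es)) z = Some y"
      "es \<noteq> []" for v es
    using vertex[OF that(1)] edges[OF that(2)] that(3) y by (cases z) auto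
  show ?thesis
  proof (cases a; cases b)
    fix es es' assume "a = PEdges es" "b = PEdges es'"
    then show ?thesis
      using edges[of es] edges[of es'] assms(1,2) by (auto intro: nth_equalityI)
  next
    fix v v' assume "a = PVtx v" "b = PVtx v'"
    then show ?thesis using vertex[of v] vertex[of v'] assms(1,2) by simp
  next
    fix v es assume "a = PVtx v" "b = PEdges es"
    then show ?thesis using vertex_edges[of v es] assms by auto
  next
    fix es v assume "a = PEdges es" "b = PVtx v"
    then show ?thesis using vertex_edges[of v es] assms by auto
  qed
qed

end

theorem lemma5p5:
  fixes V :: "'v set" and Ed :: "'e set" and r s :: "'e \<Rightarrow> 'v"
    and R :: "complex set" and x :: "('v, 'e) fa" and lam :: complex
    and \<alpha> \<beta> :: "('v, 'e) path"
  assumes "is_graph V Ed r s"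
    and "conj_closed_unital_subring R"
    and "ess_unique_partition_of_unit R"
    and "x \<in> free_alg R"
    and "lam \<in> R"
    and "is_path V Ed r s \<alpha>" and "is_path V Ed r s \<beta>"
    and "leavitt_eq R V Ed r s (fa_smult 2 x) (fa_add (path_elt \<alpha>) (fa_smult lam (path_elt \<beta>)))"
  shows "\<alpha> = \<beta>"
proof (rule ccontr)
  assume "\<alpha> \<noteq> \<beta>"
  obtain z y where z: "z \<in> valid_states Ed r s" and \<alpha>: "word_act Ed r s (path_word \<alpha>) z = Some y"
    using word_act_path_word_defined[OF assms(6)] by blast
  with \<open>\<alpha> \<noteq> \<beta>\<close> have \<beta>: "word_act Ed r s (path_word \<beta>) z \<noteq> Some y"
    using word_act_path_word_inj assms(6,7) by blast
  define P where "P = (\<lambda>w. word_act Ed r s w z \<in> Some ` {y})"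
  have fin: "finite (supp x)" using assms(4) by (simp add: free_alg_def supp_def)
  let ?q = "fa_diff (fa_smult 2 x) (fa_add (path_elt \<alpha>) (fa_smult lam (path_elt \<beta>)))"
  have "coeff_sum ?q P = 0"
    unfolding P_def using assms(8)
    by (intro coeff_sum_leavitt_ideal_word_act[OF _ z]) (simp add: leavitt_eq_def)
  moreover have "coeff_sum ?q P = 2 * coeff_sum x P - 1"
    using fin \<alpha> \<beta>
    by (simp add: path_elt_eq_fa_word coeff_sum_fa_diff coeff_sum_fa_add coeff_sum_fa_smult
        coeff_sum_fa_word finite_supp_fa_word finite_supp_fa_smult finite_supp_fa_add P_def)
  ultimately have "coeff_sum x P = 1 / 2" by (simp add: field_simps)
  moreover have "coeff_sum x P \<in> R"
    using assms(4) by (intro coeff_sum_in_subring[OF assms(2)]) (simp add: free_alg_def)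
  ultimately show False using half_not_in_ess_unique_partition[OF assms(3)] by metis
qed

end
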